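(* Let $T>0$, $0<\eta<T$, $0<\alpha<\frac{1}{\eta}$, let $f\in C([0,\infty),[0,\infty))$, and let $a\in C([0,T],[0,\infty))$ with $a(t_0)>0$ for some $t_0\in[0,T]$. Consider the boundary value problem \[ u''(t)+a(t)f(u(t))=0,\quad 0<t<T,\qquad u'(0)=0,\quad u(T)=\alpha\int_0^{\eta}u(s)\,ds. \tag{P} \] Assume that $f_0=\alpha_2\in\left(\frac{\theta_2}{\gamma}\Lambda_2,\infty\right)$ for some $\theta_2\ge1$, and $f_\infty=\beta_2\in[0,\theta_1\Lambda_1)$ for some $\theta_1\in(0,1]$. Then (P) has at least one positive solution.
   Context: $f_0=\lim_{u\to0^+}\frac{f(u)}{u}$, $f_\infty=\lim_{u\to\infty}\frac{f(u)}{u}$ (assumed to exist with the stated values; $\alpha_2,\beta_2$ are just names for these limits). $\gamma=\dfrac{\alpha\eta(T-\eta)}{T-\alpha\eta^2}$, $\Lambda_1=\dfrac{1-\alpha\eta}{\int_0^T (T-s)a(s)\,ds}$, and $\Lambda_2=\dfrac{1-\alpha\eta}{\gamma\left(\int_\eta^T (T-s)a(s)\,ds+\frac12\int_0^\eta\left[2(T-\eta)+\alpha(\eta^2-s^2)\right]a(s)\,ds\right)}$. A positive solution of (P) is a function $u\in C^2([0,T])$ satisfying (P) with $u(t)\ge0$ on $[0,T]$ and $u$ not identically zero. *)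

theory Defs
  imports "HOL-Analysis.Analysis"
begin

definition gamma_c :: "real \<Rightarrow> real \<Rightarrow> real \<Rightarrow> real" where
  "gamma_c T \<eta> \<alpha> = \<alpha> * \<eta> * (T - \<eta>) / (T - \<alpha> * \<eta>^2)"

definition Lambda1 :: "real \<Rightarrow> real \<Rightarrow> real \<Rightarrow> (real \<Rightarrow> real) \<Rightarrow> real" where
  "Lambda1 T \<eta> \<alpha> a = (1 - \<alpha> * \<eta>) / integral {0..T} (\<lambda>s. (T - s) * a s)"

definition Lambda2 :: "real \<Rightarrow> real \<Rightarrow> real \<Rightarrow> (real \<Rightarrow> real) \<Rightarrow> real" where
  "Lambda2 T \<eta> \<alpha> a = (1 - \<alpha> * \<eta>) /
     (gamma_c T \<eta> \<alpha> * (integral {\<eta>..T} (\<lambda>s. (T - s) * a s)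
        + 1/2 * integral {0..\<eta>} (\<lambda>s. (2 * (T - \<eta>) + \<alpha> * (\<eta>^2 - s^2)) * a s)))"

definition C2_with :: "real \<Rightarrow> (real \<Rightarrow> real) \<Rightarrow> (real \<Rightarrow> real) \<Rightarrow> (real \<Rightarrow> real) \<Rightarrow> bool" where
  "C2_with T u u1 u2 \<longleftrightarrow>
     (\<forall>t\<in>{0..T}. (u has_real_derivative u1 t) (at t within {0..T})) \<and>
     (\<forall>t\<in>{0..T}. (u1 has_real_derivative u2 t) (at t within {0..T})) \<and>
     continuous_on {0..T} u2"

definition positive_solution ::
  "real \<Rightarrow> real \<Rightarrow> real \<Rightarrow> (real \<Rightarrow> real) \<Rightarrow> (real \<Rightarrow> real) \<Rightarrow> (real \<Rightarrow> real) \<Rightarrow> bool" where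
  "positive_solution T \<eta> \<alpha> a f u \<longleftrightarrow>
     (\<exists>u1 u2. C2_with T u u1 u2 \<and>
        (\<forall>t. 0 < t \<and> t < T \<longrightarrow> u2 t + a t * f (u t) = 0) \<and>
        u1 0 = 0 \<and>
        u T = \<alpha> * integral {0..\<eta>} u) \<and>
     (\<forall>t\<in>{0..T}. u t \<ge> 0) \<and> (\<exists>t\<in>{0..T}. u t \<noteq> 0)"

end

theory Submission
  imports Defs "HOL-Complex_Analysis.Great_Picard"
begin

text \<open>We shoot in the initial value \<open>c = u(0)\<close>, using delayed problems to get continuous
  dependence on \<open>c\<close> without any uniqueness for (P). For \<open>h > 0\<close> the problem
  \<open>u'' + a f(u(t - h)) = 0, u'(0) = 0, u(0) = c\<close> is solved uniquely by the method of steps, and its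
  solution depends continuously on \<open>c\<close>. Every such solution is concave and decreasing; this gives
  \<open>\<gamma> c \<le> u(T)\<close> whenever \<open>\<alpha> \<integral>\<^sub>0\<^sup>\<eta> u \<le> u(T)\<close>, so \<open>f\<^sub>0 > \<Lambda>\<^sub>2\<close> makes the boundary defect
  \<open>u(T) - \<alpha> \<integral>\<^sub>0\<^sup>\<eta> u\<close> negative for small \<open>c\<close>, while \<open>f\<^sub>\<infinity> < \<Lambda>\<^sub>1\<close> makes it positive for large \<open>c\<close>.
  The intermediate value theorem yields zeros \<open>c\<^sub>h \<in> [\<delta>, R]\<close>, the corresponding solutions are
  bounded and equi-Lipschitz, and by Arzela--Ascoli a subsequence converges uniformly as
  \<open>h \<rightarrow> 0\<close> to a solution of (P) with \<open>u(0) \<ge> \<delta> > 0\<close>. The hypotheses of the corollary imply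
  \<open>f\<^sub>0 > \<Lambda>\<^sub>2\<close> and \<open>f\<^sub>\<infinity> < \<Lambda>\<^sub>1\<close> because \<open>\<theta>\<^sub>1 \<le> 1 \<le> \<theta>\<^sub>2 / \<gamma>\<close>.\<close>

lemma integral_le_const:
  fixes g :: "real \<Rightarrow> real"
  assumes "x \<le> y" "continuous_on {x..y} g" "\<And>t. t \<in> {x..y} \<Longrightarrow> g t \<le> B"
  shows "integral {x..y} g \<le> B * (y - x)"
proof -
  have "integral {x..y} g \<le> integral {x..y} (\<lambda>t. B)"
    by (rule integral_le) (auto intro: integrable_continuous_interval assms)
  then show ?thesis using assms(1) by (simp add: mult.commute)
qed

lemma integral_ge_const:
  fixes g :: "real \<Rightarrow> real"
  assumes "x \<le> y" "continuous_on {x..y} g" "\<And>t. t \<in> {x..y} \<Longrightarrow> B \<le> g t"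
  shows "B * (y - x) \<le> integral {x..y} g"
proof -
  have "integral {x..y} (\<lambda>t. B) \<le> integral {x..y} g"
    by (rule integral_le) (auto intro: integrable_continuous_interval assms)
  then show ?thesis using assms(1) by (simp add: mult.commute)
qed

lemma integral_eq_antiderivative_diff:
  fixes g G :: "real \<Rightarrow> real"
  assumes "x \<le> y" "\<And>t. t \<in> {x..y} \<Longrightarrow> (G has_real_derivative g t) (at t within {x..y})"
  shows "integral {x..y} g = G y - G x"
  using fundamental_theorem_of_calculus[OF assms(1)] assms(2)
  by (metis has_real_derivative_iff_has_vector_derivative integral_unique)

lemma continuous_on_subinterval:
  fixes g :: "real \<Rightarrow> real"
  shows "continuous_on {0..T} g \<Longrightarrow> 0 \<le> x \<Longrightarrow> y \<le> T \<Longrightarrow> continuous_on {x..y} g"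
  by (erule continuous_on_subset) auto

lemma integrable_on_subinterval:
  fixes g :: "real \<Rightarrow> real"
  shows "continuous_on {0..T} g \<Longrightarrow> 0 \<le> x \<Longrightarrow> y \<le> T \<Longrightarrow> g integrable_on {x..y}"
  by (rule integrable_continuous_interval, rule continuous_on_subinterval)

lemma integral_pos_if_pos_point:
  fixes g :: "real \<Rightarrow> real"
  assumes "x < y" "continuous_on {x..y} g" "\<And>t. t \<in> {x..y} \<Longrightarrow> 0 \<le> g t"
    and "z \<in> {x..y}" "0 < g z"
  shows "0 < integral {x..y} g"
proof -
  have "0 \<le> integral {x..y} g"
    using assms(2,3) by (intro integral_nonneg integrable_continuous_interval) auto
  moreover have "integral {x..y} g \<noteq> 0"
  proof
    assume "integral {x..y} g = 0"
    then have "(g has_integral 0) {x..y}"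
      using integrable_integral[OF integrable_continuous_interval[OF assms(2)]] by simp
    then have "g z = 0" using has_integral_0_cbox_imp_0[of x y g z] assms by auto
    then show False using assms(5) by simp
  qed
  ultimately show ?thesis by simp
qed

lemma equi_lipschitz_uniformly_convergent_subseq:
  fixes us :: "nat \<Rightarrow> real \<Rightarrow> real"
  assumes bound: "\<And>n x. x \<in> {a..b} \<Longrightarrow> \<bar>us n x\<bar> \<le> R" and L: "L \<ge> 0"
    and lip: "\<And>n x y. x \<in> {a..b} \<Longrightarrow> y \<in> {a..b} \<Longrightarrow> \<bar>us n x - us n y\<bar> \<le> L * \<bar>x - y\<bar>"
  obtains g k where "strict_mono k" "uniform_limit {a..b} (\<lambda>n. us (k n)) g sequentially"
proof -
  have bound': "\<And>n x. x \<in> {a..b} \<Longrightarrow> norm (us n x) \<le> R" using bound by simp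
  have equicont: "\<exists>d>0. \<forall>n y. y \<in> {a..b} \<and> norm (x - y) < d \<longrightarrow> norm (us n x - us n y) < e"
    if x: "x \<in> {a..b}" and e: "0 < e" for x e :: real
  proof (intro exI[of _ "e / (L + 1)"] conjI allI impI)
    show "e / (L + 1) > 0" using e L by simp
    fix n y assume y: "y \<in> {a..b} \<and> norm (x - y) < e / (L + 1)"
    have "\<bar>us n x - us n y\<bar> \<le> L * \<bar>x - y\<bar>" using lip x y by blast
    also have "\<dots> \<le> L * (e / (L + 1))" using y L by (intro mult_left_mono) auto
    also have "\<dots> < (L + 1) * (e / (L + 1))" using e L by (intro mult_strict_right_mono) auto
    also have "\<dots> = e" using L by simp
    finally show "norm (us n x - us n y) < e" by simp
  qed
  show ?thesis
  proof (rule Arzela_Ascoli[OF compact_Icc bound' equicont])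
    fix g :: "real \<Rightarrow> real" and k :: "nat \<Rightarrow> nat"
    assume "continuous_on {a..b} g" and k: "strict_mono k"
      and conv: "\<And>e. 0 < e \<Longrightarrow> \<exists>N. \<forall>n x. n \<ge> N \<and> x \<in> {a..b} \<longrightarrow> norm (us (k n) x - g x) < e"
    have "uniform_limit {a..b} (\<lambda>n. us (k n)) g sequentially"
      unfolding uniform_limit_sequentially_iff dist_norm
    proof (intro allI impI)
      fix e :: real assume "e > 0"
      then obtain N where "\<forall>n x. n \<ge> N \<and> x \<in> {a..b} \<longrightarrow> norm (us (k n) x - g x) < e"
        using conv by blast
      then show "\<exists>N. \<forall>n\<ge>N. \<forall>x\<in>{a..b}. norm (us (k n) x - g x) < e" by blast
    qed
    then show ?thesis by (rule that[OF k])
  qed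
qed

locale bvp =
  fixes T \<eta> \<alpha> :: real and a f :: "real \<Rightarrow> real"
  assumes T_pos: "T > 0" and eta_pos: "0 < \<eta>" and eta_lt: "\<eta> < T"
    and alpha_pos: "0 < \<alpha>" and alpha_eta: "\<alpha> * \<eta> < 1"
    and f_cont: "continuous_on {0..} f" and f_nonneg: "\<And>x. x \<ge> 0 \<Longrightarrow> f x \<ge> 0"
    and a_cont: "continuous_on {0..T} a" and a_nonneg: "\<And>t. t \<in> {0..T} \<Longrightarrow> a t \<ge> 0"
begin

text \<open>Approximate solutions are not known to be nonnegative in advance, so \<open>f\<close> is extended
  to all of \<open>\<real>\<close>.\<close>

definition f_ext :: "real \<Rightarrow> real" where "f_ext x = f (max x 0)"

lemma f_ext_cont: "continuous_on UNIV f_ext"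
  unfolding f_ext_def[abs_def]
  by (rule continuous_on_compose2[OF f_cont]) (auto intro!: continuous_intros)

lemma continuous_on_f_ext_comp: "continuous_on S g \<Longrightarrow> continuous_on S (\<lambda>x. f_ext (g x))"
  by (rule continuous_on_compose2[OF f_ext_cont]) auto

lemma f_ext_nonneg: "f_ext x \<ge> 0"
  unfolding f_ext_def by (rule f_nonneg) simp

lemma f_ext_eq: "x \<ge> 0 \<Longrightarrow> f_ext x = f x"
  unfolding f_ext_def by simp

lemma f_bounded:
  obtains M where "M \<ge> 0" "\<And>x. x \<in> {0..r} \<Longrightarrow> f x \<le> M"
proof -
  obtain M0 where M0: "\<forall>y\<in>f ` {0..r}. \<bar>y\<bar> \<le> M0"
    using compact_imp_bounded[OF compact_continuous_image[OF continuous_on_subset[OF f_cont]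
          compact_Icc, of 0 r]]
    by (auto simp: bounded_iff)
  show ?thesis
  proof (rule that)
    fix x assume "x \<in> {0..r}"
    then have "\<bar>f x\<bar> \<le> M0" using M0 by blast
    then show "f x \<le> max M0 0" by simp
  qed simp
qed

definition A :: "real \<Rightarrow> real" where "A r = integral {0..r} a"

lemma A_deriv: "{x..y} \<subseteq> {0..T} \<Longrightarrow> r \<in> {x..y} \<Longrightarrow> (A has_real_derivative a r) (at r within {x..y})"
  unfolding A_def[abs_def]
  by (rule DERIV_subset[OF integral_has_real_derivative[OF a_cont]]) auto

lemma A_cont: "continuous_on {0..T} A"
  unfolding A_def[abs_def]
  by (rule indefinite_integral_continuous_1) (rule integrable_continuous_interval[OF a_cont])

lemma A_0: "A 0 = 0" unfolding A_def by simp

lemma A_mono: "0 \<le> x \<Longrightarrow> x \<le> y \<Longrightarrow> y \<le> T \<Longrightarrow> A x \<le> A y"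
proof -
  assume h: "0 \<le> x" "x \<le> y" "y \<le> T"
  have "A y = A x + integral {x..y} a"
    unfolding A_def using Henstock_Kurzweil_Integration.integral_combine[OF h(1,2) integrable_on_subinterval[OF a_cont]] h by simp
  moreover have "integral {x..y} a \<ge> 0"
    by (rule integral_nonneg) (use integrable_on_subinterval[OF a_cont] h a_nonneg in auto)
  ultimately show ?thesis by simp
qed

lemma A_nonneg: "r \<in> {0..T} \<Longrightarrow> A r \<ge> 0"
  using A_mono[of 0 r] A_0 by simp

definition I1 :: real where "I1 = integral {0..T} A"

definition D :: real where "D = integral {\<eta>..T} A + \<alpha> * integral {0..\<eta>} (\<lambda>x. x * A x)"

lemma integral_A_tail_pos: assumes "t0 \<in> {0..T}" "a t0 > 0" shows "integral {\<eta>..T} A > 0"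
proof (rule integral_pos_if_pos_point)
  show "0 < A T"
    unfolding A_def using T_pos a_cont a_nonneg assms by (intro integral_pos_if_pos_point) auto
qed (use eta_pos eta_lt A_nonneg continuous_on_subinterval[OF A_cont] in auto)

lemma I1_pos: assumes "t0 \<in> {0..T}" "a t0 > 0" shows "I1 > 0"
proof -
  have "integral {0..\<eta>} A \<ge> 0"
    by (rule integral_nonneg) (use integrable_on_subinterval[OF A_cont] A_nonneg eta_lt in auto)
  moreover have "I1 = integral {0..\<eta>} A + integral {\<eta>..T} A"
    unfolding I1_def using Henstock_Kurzweil_Integration.integral_combine[OF _ _ integrable_on_subinterval[OF A_cont]] eta_pos eta_lt
    by simp
  ultimately show ?thesis using integral_A_tail_pos[OF assms] by simp
qed

lemma D_pos: assumes "t0 \<in> {0..T}" "a t0 > 0" shows "D > 0"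
proof -
  have "integral {0..\<eta>} (\<lambda>x. x * A x) \<ge> 0"
    by (rule integral_nonneg)
      (use eta_lt A_nonneg in \<open>auto intro!: integrable_on_subinterval[where T=T] continuous_intros A_cont\<close>)
  then show ?thesis unfolding D_def using integral_A_tail_pos[OF assms] alpha_pos by (simp add: add_pos_nonneg)
qed

lemma Lambda1_eq: "Lambda1 T \<eta> \<alpha> a = (1 - \<alpha> * \<eta>) / I1"
proof -
  have "integral {0..T} (\<lambda>s. (T - s) * a s)
      = ((T - T) * A T + integral {0..T} A) - ((T - 0) * A 0 + integral {0..0} A)"
  proof (rule integral_eq_antiderivative_diff)
    fix t assume t: "t \<in> {0..T}"
    show "((\<lambda>r. (T - r) * A r + integral {0..r} A) has_real_derivative (T - t) * a t) (at t within {0..T})"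
      using A_deriv[OF _ t] integral_has_real_derivative[OF A_cont t]
      by (auto intro!: derivative_eq_intros simp: algebra_simps)
  qed (use T_pos in auto)
  then show ?thesis unfolding Lambda1_def by (simp add: A_0 I1_def)
qed

lemma Lambda2_eq: "Lambda2 T \<eta> \<alpha> a = (1 - \<alpha> * \<eta>) / (gamma_c T \<eta> \<alpha> * D)"
proof -
  have A_cont': "continuous_on {\<eta>..T} A" "continuous_on {0..\<eta>} (\<lambda>x. x * A x)"
    using eta_pos eta_lt by (auto intro!: continuous_intros continuous_on_subinterval[OF A_cont])
  have "integral {\<eta>..T} (\<lambda>s. (T - s) * a s)
      = ((T - T) * A T + integral {\<eta>..T} A) - ((T - \<eta>) * A \<eta> + integral {\<eta>..\<eta>} A)"
  proof (rule integral_eq_antiderivative_diff)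
    fix t assume t: "t \<in> {\<eta>..T}"
    show "((\<lambda>r. (T - r) * A r + integral {\<eta>..r} A) has_real_derivative (T - t) * a t) (at t within {\<eta>..T})"
      using A_deriv[OF _ t] integral_has_real_derivative[OF A_cont'(1) t] eta_pos
      by (auto intro!: derivative_eq_intros simp: algebra_simps)
  qed (use eta_lt in auto)
  moreover have "integral {0..\<eta>} (\<lambda>s. (2*(T-\<eta>) + \<alpha>*(\<eta>^2 - s^2)) * a s)
      = ((2*(T-\<eta>) + \<alpha>*(\<eta>^2 - \<eta>^2)) * A \<eta> + 2 * \<alpha> * integral {0..\<eta>} (\<lambda>x. x * A x))
        - ((2*(T-\<eta>) + \<alpha>*(\<eta>^2 - 0^2)) * A 0 + 2 * \<alpha> * integral {0..0} (\<lambda>x. x * A x))"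
  proof (rule integral_eq_antiderivative_diff)
    fix t assume t: "t \<in> {0..\<eta>}"
    show "((\<lambda>r. (2*(T-\<eta>) + \<alpha>*(\<eta>^2 - r^2)) * A r + 2 * \<alpha> * integral {0..r} (\<lambda>x. x * A x))
        has_real_derivative (2*(T-\<eta>) + \<alpha>*(\<eta>^2 - t^2)) * a t) (at t within {0..\<eta>})"
      using A_deriv[OF _ t] integral_has_real_derivative[OF A_cont'(2) t] eta_lt
      by (auto intro!: derivative_eq_intros simp: algebra_simps power2_eq_square)
  qed (use eta_pos in auto)
  ultimately have "integral {\<eta>..T} (\<lambda>s. (T - s) * a s)
      + 1/2 * integral {0..\<eta>} (\<lambda>s. (2 * (T - \<eta>) + \<alpha> * (\<eta>^2 - s^2)) * a s) = D"
    unfolding D_def by (simp add: A_0 algebra_simps)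
  then show ?thesis unfolding Lambda2_def by simp
qed

lemma T_minus_alpha_eta2_pos: "T - \<alpha> * \<eta>^2 > 0"
proof -
  have "\<alpha> * \<eta>^2 = (\<alpha> * \<eta>) * \<eta>" by (simp add: power2_eq_square)
  also have "\<dots> < \<eta>" using alpha_eta eta_pos by simp
  finally show ?thesis using eta_lt by simp
qed

lemma gamma_pos: "gamma_c T \<eta> \<alpha> > 0"
  unfolding gamma_c_def using T_minus_alpha_eta2_pos alpha_pos eta_pos eta_lt by simp

lemma gamma_le_1: "gamma_c T \<eta> \<alpha> \<le> 1"
proof -
  have "\<alpha> * \<eta> * (T - \<eta>) \<le> T - \<alpha> * \<eta>^2"
    using mult_right_mono[OF less_imp_le[OF alpha_eta], of T] T_pos
    by (simp add: algebra_simps power2_eq_square)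
  then show ?thesis unfolding gamma_c_def using T_minus_alpha_eta2_pos by simp
qed

definition Q :: "(real \<Rightarrow> real) \<Rightarrow> real \<Rightarrow> real" where
  "Q G r = integral {0..r} (\<lambda>s. a s * G s)"

text \<open>\<open>sol G c\<close> solves \<open>u'' + a G = 0, u'(0) = 0, u(0) = c\<close>.\<close>

definition sol :: "(real \<Rightarrow> real) \<Rightarrow> real \<Rightarrow> real \<Rightarrow> real" where
  "sol G c t = c - integral {0..t} (Q G)"

lemma Q_0: "Q G 0 = 0"
  unfolding Q_def by simp

lemma Q_deriv:
  assumes "continuous_on {0..T} G" "r \<in> {0..T}"
  shows "(Q G has_real_derivative a r * G r) (at r within {0..T})"
  unfolding Q_def[abs_def]
  by (rule integral_has_real_derivative) (use assms in \<open>auto intro!: continuous_intros a_cont\<close>)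

lemma Q_cont: assumes "continuous_on {0..T} G" shows "continuous_on {0..T} (Q G)"
  unfolding Q_def[abs_def]
  by (intro indefinite_integral_continuous_1 integrable_continuous_interval continuous_intros a_cont assms)

lemma sol_deriv:
  assumes "continuous_on {0..T} G" "t \<in> {0..T}"
  shows "(sol G c has_real_derivative - Q G t) (at t within {0..T})"
  unfolding sol_def[abs_def]
  using DERIV_diff[OF DERIV_const integral_has_real_derivative[OF Q_cont[OF assms(1)] assms(2)]] by simp

lemma sol_cont: assumes "continuous_on {0..T} G" shows "continuous_on {0..T} (sol G c)"
  unfolding sol_def[abs_def]
  by (intro continuous_intros indefinite_integral_continuous_1 integrable_continuous_interval
      Q_cont assms)

lemma Q_dist_le:
  assumes G: "continuous_on {0..T} G1" "continuous_on {0..T} G2"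
    and e: "\<And>s. s \<in> {0..T} \<Longrightarrow> \<bar>G1 s - G2 s\<bar> \<le> e" and r: "r \<in> {0..T}"
  shows "\<bar>Q G1 r - Q G2 r\<bar> \<le> A T * e"
proof -
  have int: "(\<lambda>s. a s * G s) integrable_on {0..r}" if "continuous_on {0..T} G" for G
    using r that by (intro integrable_on_subinterval[where T=T] continuous_intros a_cont) auto
  have "Q G1 r - Q G2 r = integral {0..r} (\<lambda>s. a s * (G1 s - G2 s))"
    unfolding Q_def using int[OF G(1)] int[OF G(2)] by (simp add: integral_diff right_diff_distrib)
  also have "\<bar>\<dots>\<bar> \<le> integral {0..r} (\<lambda>s. a s * e)"
  proof (rule integral_norm_bound_integral[where 'a=real, unfolded real_norm_def])
    show "(\<lambda>s. a s * (G1 s - G2 s)) integrable_on {0..r}"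
      using r G by (intro integrable_on_subinterval[where T=T] continuous_intros a_cont) auto
    show "(\<lambda>s. a s * e) integrable_on {0..r}"
      using r by (intro integrable_on_subinterval[where T=T] continuous_intros a_cont) auto
    fix s assume "s \<in> {0..r}"
    then have "s \<in> {0..T}" using r by auto
    then show "\<bar>a s * (G1 s - G2 s)\<bar> \<le> a s * e"
      using e a_nonneg by (simp add: abs_mult mult_left_mono)
  qed
  also have "\<dots> = A r * e" unfolding A_def by simp
  also have "\<dots> \<le> A T * e"
    using A_mono[of r T] r e[of 0] T_pos by (intro mult_right_mono) auto
  finally show ?thesis .
qed

lemma sol_dist_le:
  assumes G: "continuous_on {0..T} G1" "continuous_on {0..T} G2"
    and e: "\<And>s. s \<in> {0..T} \<Longrightarrow> \<bar>G1 s - G2 s\<bar> \<le> e" and t: "t \<in> {0..T}"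
  shows "\<bar>sol G1 c1 t - sol G2 c2 t\<bar> \<le> \<bar>c1 - c2\<bar> + T * A T * e"
proof -
  have "integral {0..t} (Q G1) - integral {0..t} (Q G2) = integral {0..t} (\<lambda>r. Q G1 r - Q G2 r)"
    using t by (intro integral_diff[symmetric] integrable_on_subinterval[OF Q_cont] G) auto
  also have "\<bar>\<dots>\<bar> \<le> A T * e * (t - 0)"
  proof (rule integral_bound[where 'a=real, unfolded real_norm_def])
    show "continuous_on {0..t} (\<lambda>r. Q G1 r - Q G2 r)"
      using t by (intro continuous_on_diff continuous_on_subinterval[OF Q_cont[OF G(1)]]
          continuous_on_subinterval[OF Q_cont[OF G(2)]]) auto
  qed (use t Q_dist_le[OF G e] in auto)
  also have "\<dots> \<le> A T * e * T"
    using t A_nonneg[of T] e[of 0] T_pos by (intro mult_left_mono) auto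
  also have "\<dots> = T * A T * e" by simp
  finally show ?thesis unfolding sol_def by linarith
qed

lemma uniform_limit_sol:
  assumes lim: "uniform_limit {0..T} Gs G F" "(cs \<longlongrightarrow> c) F"
    and cont: "\<And>n. continuous_on {0..T} (Gs n)" "continuous_on {0..T} G"
  shows "uniform_limit {0..T} (\<lambda>n. sol (Gs n) (cs n)) (sol G c) F"
proof (rule uniform_limitI)
  fix e :: real assume e: "e > 0"
  define K where "K = T * A T + 1"
  have K: "K > 0"
    unfolding K_def using mult_nonneg_nonneg[OF less_imp_le[OF T_pos] A_nonneg[of T]] T_pos by simp
  have "\<forall>\<^sub>F n in F. \<forall>s\<in>{0..T}. dist (Gs n s) (G s) < e / (2 * K)"
    using e K by (intro uniform_limitD[OF lim(1)]) simp
  moreover have "\<forall>\<^sub>F n in F. dist (cs n) c < e / 2"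
    using e by (intro tendstoD[OF lim(2)]) simp
  ultimately show "\<forall>\<^sub>F n in F. \<forall>t\<in>{0..T}. dist (sol (Gs n) (cs n) t) (sol G c t) < e"
  proof eventually_elim
    case (elim n)
    show ?case
    proof
      fix t assume t: "t \<in> {0..T}"
      have "\<bar>sol (Gs n) (cs n) t - sol G c t\<bar> \<le> \<bar>cs n - c\<bar> + T * A T * (e / (2 * K))"
        using elim(1) by (intro sol_dist_le cont t) (simp add: dist_real_def less_imp_le)
      also have "T * A T * (e / (2 * K)) \<le> K * (e / (2 * K))"
        using e K unfolding K_def by (intro mult_right_mono) auto
      also have "\<dots> = e / 2" using K by simp
      finally show "dist (sol (Gs n) (cs n) t) (sol G c t) < e"
        using elim(2) by (simp add: dist_real_def)
    qed
  qed
qed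

definition defect :: "(real \<Rightarrow> real) \<Rightarrow> real" where
  "defect v = v T - \<alpha> * integral {0..\<eta>} v"

lemma tendsto_defect:
  assumes "uniform_limit {0..T} vs v F" "\<And>n. continuous_on {0..T} (vs n)" "F \<noteq> bot"
  shows "((\<lambda>n. defect (vs n)) \<longlongrightarrow> defect v) F"
proof -
  have "uniform_limit {0..\<eta>} vs v F"
    using eta_lt by (intro uniform_limit_on_subset[OF assms(1)]) auto
  moreover have "continuous_on {0..\<eta>} (vs n)" for n
    using eta_lt by (intro continuous_on_subinterval[OF assms(2)]) auto
  ultimately obtain I J where
    I: "\<And>n. (vs n has_integral I n) {0..\<eta>}" "(v has_integral J) {0..\<eta>}" "(I \<longlongrightarrow> J) F"
    using uniform_limit_integral assms(3) by blast
  have "(\<lambda>n. integral {0..\<eta>} (vs n)) = I" "integral {0..\<eta>} v = J"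
    using I(1,2) by (auto intro: integral_unique)
  with I(3) have "((\<lambda>n. integral {0..\<eta>} (vs n)) \<longlongrightarrow> integral {0..\<eta>} v) F"
    by simp
  moreover have "((\<lambda>n. vs n T) \<longlongrightarrow> v T) F"
    using T_pos by (intro tendsto_uniform_limitI[OF assms(1)]) auto
  ultimately show ?thesis
    unfolding defect_def by (intro tendsto_intros)
qed

end

section \<open>Concave trajectories\<close>

locale trajectory = bvp +
  fixes G :: "real \<Rightarrow> real" and c :: real and u :: "real \<Rightarrow> real"
  assumes G_cont: "continuous_on {0..T} G" and G_nonneg: "\<And>s. s \<in> {0..T} \<Longrightarrow> G s \<ge> 0"
    and u_eq: "\<And>t. t \<in> {0..T} \<Longrightarrow> u t = sol G c t"
begin

lemma aG_cont: "continuous_on {0..T} (\<lambda>s. a s * G s)"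
  by (intro continuous_intros a_cont G_cont)

lemma integral_aG_nonneg: "0 \<le> x \<Longrightarrow> x \<le> y \<Longrightarrow> y \<le> T \<Longrightarrow> integral {x..y} (\<lambda>s. a s * G s) \<ge> 0"
  by (rule integral_nonneg) (use integrable_on_subinterval[OF aG_cont] a_nonneg G_nonneg in auto)

lemma Q_mono: "0 \<le> x \<Longrightarrow> x \<le> y \<Longrightarrow> y \<le> T \<Longrightarrow> Q G x \<le> Q G y"
  unfolding Q_def
  using Henstock_Kurzweil_Integration.integral_combine[OF _ _ integrable_on_subinterval[OF aG_cont]]
    integral_aG_nonneg
  by fastforce

lemma Q_nonneg: "r \<in> {0..T} \<Longrightarrow> Q G r \<ge> 0"
  using Q_mono[of 0 r] Q_0 by auto

lemma Q_lower:
  assumes "\<And>s. s \<in> {0..T} \<Longrightarrow> m \<le> G s" "r \<in> {0..T}"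
  shows "m * A r \<le> Q G r"
proof -
  have "m * A r = integral {0..r} (\<lambda>s. m * a s)" unfolding A_def by simp
  also have "\<dots> \<le> Q G r" unfolding Q_def
  proof (rule integral_le)
    show "(\<lambda>s. m * a s) integrable_on {0..r}" "(\<lambda>s. a s * G s) integrable_on {0..r}"
      using assms(2) by (auto intro!: integrable_on_subinterval[where T=T] continuous_intros a_cont G_cont)
    fix s assume "s \<in> {0..r}"
    then have "m \<le> G s" "0 \<le> a s" using assms a_nonneg by auto
    then show "m * a s \<le> a s * G s" by (simp add: mult.commute mult_right_mono)
  qed
  finally show ?thesis .
qed

lemma Q_upper:
  assumes "\<And>s. s \<in> {0..T} \<Longrightarrow> G s \<le> M" "r \<in> {0..T}"
  shows "Q G r \<le> M * A r"
proof -
  have "Q G r \<le> integral {0..r} (\<lambda>s. M * a s)" unfolding Q_def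
  proof (rule integral_le)
    show "(\<lambda>s. M * a s) integrable_on {0..r}" "(\<lambda>s. a s * G s) integrable_on {0..r}"
      using assms(2) by (auto intro!: integrable_on_subinterval[where T=T] continuous_intros a_cont G_cont)
    fix s assume "s \<in> {0..r}"
    then have "G s \<le> M" "0 \<le> a s" using assms a_nonneg by auto
    then show "a s * G s \<le> M * a s" by (simp add: mult.commute mult_right_mono)
  qed
  then show ?thesis by (simp add: A_def)
qed

lemma u_deriv: "t \<in> {0..T} \<Longrightarrow> (u has_real_derivative - Q G t) (at t within {0..T})"
  by (rule has_field_derivative_transform_within[OF sol_deriv[OF G_cont], where d=1])
    (auto simp: u_eq)

lemma u_cont: "continuous_on {0..T} u"
  using sol_cont[OF G_cont] by (rule continuous_on_eq) (simp add: u_eq)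

lemma u_0: "u 0 = c"
  using u_eq[of 0] T_pos by (simp add: sol_def)

lemma u_T: "u T = c - integral {0..T} (Q G)"
  using u_eq[of T] T_pos by (simp add: sol_def)

lemma u_split:
  assumes "0 \<le> x" "x \<le> y" "y \<le> T"
  shows "u x = u y + integral {x..y} (Q G)"
proof -
  have "integral {0..x} (Q G) + integral {x..y} (Q G) = integral {0..y} (Q G)"
    using assms by (intro Henstock_Kurzweil_Integration.integral_combine
        integrable_on_subinterval[OF Q_cont[OF G_cont]]) auto
  then show ?thesis using assms by (simp add: u_eq sol_def)
qed

lemma u_antimono:
  assumes "0 \<le> x" "x \<le> y" "y \<le> T"
  shows "u y \<le> u x"
proof -
  have "integral {x..y} (Q G) \<ge> 0"
    by (rule integral_nonneg)
      (use integrable_on_subinterval[OF Q_cont[OF G_cont]] assms Q_nonneg in auto)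
  then show ?thesis using u_split[OF assms] by simp
qed

lemma u_le_c: "t \<in> {0..T} \<Longrightarrow> u t \<le> c"
  using u_antimono[of 0 t] u_0 by auto

lemma u_lipschitz:
  assumes G_le: "\<And>s. s \<in> {0..T} \<Longrightarrow> G s \<le> M" and t: "t \<in> {0..T}" "t' \<in> {0..T}"
  shows "\<bar>u t - u t'\<bar> \<le> M * A T * \<bar>t - t'\<bar>"
proof -
  have M: "0 \<le> M" using G_le[of 0] G_nonneg[of 0] T_pos by auto
  have step: "\<bar>u x - u y\<bar> \<le> M * A T * \<bar>x - y\<bar>" if xy: "0 \<le> x" "x \<le> y" "y \<le> T" for x y
  proof -
    have "Q G r \<le> M * A T" if "r \<in> {x..y}" for r
    proof -
      have "Q G r \<le> M * A r" using Q_upper[OF G_le] that xy by simp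
      also have "\<dots> \<le> M * A T" using A_mono[of r T] that xy M by (simp add: mult_left_mono)
      finally show ?thesis .
    qed
    then have "integral {x..y} (Q G) \<le> M * A T * (y - x)"
      by (intro integral_le_const xy(2) continuous_on_subinterval[OF Q_cont[OF G_cont]] xy)
    moreover have "u y \<le> u x" by (rule u_antimono[OF xy])
    ultimately show ?thesis using u_split[OF xy] xy(2) by simp
  qed
  show ?thesis
    using step[of t t'] step[of t' t] t by (cases "t \<le> t'") (auto simp: abs_minus_commute)
qed

lemma integral_Q_ge:
  assumes "\<And>s. s \<in> {0..T} \<Longrightarrow> m \<le> G s" "0 \<le> x" "x \<le> y" "y \<le> T"
  shows "m * integral {x..y} A \<le> integral {x..y} (Q G)"
proof -
  have "integral {x..y} (\<lambda>r. m * A r) \<le> integral {x..y} (Q G)"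
    using assms Q_lower[OF assms(1)]
    by (intro integral_le integrable_on_subinterval[where T=T] continuous_intros A_cont
        Q_cont G_cont) auto
  then show ?thesis by simp
qed

lemma integral_u_eq: "integral {0..\<eta>} u = \<eta> * u \<eta> + integral {0..\<eta>} (\<lambda>t. t * Q G t)"
proof -
  have int: "u integrable_on {0..\<eta>}" "(\<lambda>t. t * Q G t) integrable_on {0..\<eta>}"
    using eta_lt by (auto intro!: integrable_on_subinterval[where T=T] continuous_intros u_cont
        Q_cont G_cont)
  have "integral {0..\<eta>} (\<lambda>t. u t - t * Q G t) = \<eta> * u \<eta> - 0 * u 0"
  proof (rule integral_eq_antiderivative_diff)
    fix t assume t: "t \<in> {0..\<eta>}"
    have "(u has_real_derivative - Q G t) (at t within {0..\<eta>})"
      using t eta_lt by (intro DERIV_subset[OF u_deriv]) auto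
    then show "((\<lambda>t. t * u t) has_real_derivative u t - t * Q G t) (at t within {0..\<eta>})"
      by (auto intro!: derivative_eq_intros)
  qed (use eta_pos in auto)
  then show ?thesis using integral_diff[OF int] by simp
qed

lemma integral_u_bounds:
  "\<eta> * u T \<le> integral {0..\<eta>} u" "\<eta> * u \<eta> \<le> integral {0..\<eta>} u" "integral {0..\<eta>} u \<le> \<eta> * c"
proof -
  have cont: "continuous_on {0..\<eta>} u"
    using eta_lt by (intro continuous_on_subinterval[OF u_cont]) auto
  have "u T * (\<eta> - 0) \<le> integral {0..\<eta>} u"
    by (rule integral_ge_const[OF _ cont]) (use eta_pos eta_lt in \<open>auto intro!: u_antimono\<close>)
  then show "\<eta> * u T \<le> integral {0..\<eta>} u" by (simp add: mult.commute)
  have "u \<eta> * (\<eta> - 0) \<le> integral {0..\<eta>} u"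
    by (rule integral_ge_const[OF _ cont]) (use eta_pos eta_lt in \<open>auto intro!: u_antimono\<close>)
  then show "\<eta> * u \<eta> \<le> integral {0..\<eta>} u" by (simp add: mult.commute)
  have "integral {0..\<eta>} u \<le> c * (\<eta> - 0)"
    by (rule integral_le_const[OF _ cont]) (use eta_pos eta_lt in \<open>auto intro!: u_le_c\<close>)
  then show "integral {0..\<eta>} u \<le> \<eta> * c" by (simp add: mult.commute)
qed

text \<open>Concavity of \<open>u\<close>, evaluated at \<open>\<eta>\<close>.\<close>

lemma concave_at_eta: "(T - \<eta>) * c + \<eta> * u T \<le> T * u \<eta>"
proof -
  have cont: "continuous_on {0..\<eta>} (Q G)" "continuous_on {\<eta>..T} (Q G)"
    using eta_pos eta_lt by (auto intro!: continuous_on_subinterval[OF Q_cont[OF G_cont]])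
  have "integral {0..\<eta>} (Q G) \<le> Q G \<eta> * (\<eta> - 0)"
    by (rule integral_le_const[OF _ cont(1)]) (use eta_pos eta_lt in \<open>auto intro!: Q_mono\<close>)
  then have "c - u \<eta> \<le> Q G \<eta> * \<eta>"
    using u_split[of 0 \<eta>] u_0 eta_pos eta_lt by simp
  then have "(c - u \<eta>) * (T - \<eta>) \<le> (Q G \<eta> * \<eta>) * (T - \<eta>)"
    using eta_lt by (intro mult_right_mono) auto
  also have "\<dots> = \<eta> * (Q G \<eta> * (T - \<eta>))" by simp
  also have "Q G \<eta> * (T - \<eta>) \<le> integral {\<eta>..T} (Q G)"
    by (rule integral_ge_const[OF _ cont(2)]) (use eta_pos eta_lt in \<open>auto intro!: Q_mono\<close>)
  also have "integral {\<eta>..T} (Q G) = u \<eta> - u T"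
    using u_split[of \<eta> T] eta_pos eta_lt by simp
  finally have "(c - u \<eta>) * (T - \<eta>) \<le> \<eta> * (u \<eta> - u T)"
    using eta_pos by (simp add: mult_left_mono)
  then show ?thesis by (simp add: algebra_simps)
qed

lemma defect_nonneg_imp_u_T_nonneg:
  assumes "defect u \<ge> 0"
  shows "u T \<ge> 0"
proof -
  have "\<alpha> * (\<eta> * u T) \<le> \<alpha> * integral {0..\<eta>} u"
    using integral_u_bounds(1) alpha_pos by (simp add: mult_left_mono)
  also have "\<dots> \<le> u T" using assms unfolding defect_def by simp
  finally have "(1 - \<alpha> * \<eta>) * u T \<ge> 0" by (simp add: algebra_simps)
  then show ?thesis using alpha_eta by (simp add: zero_le_mult_iff)
qed

lemma defect_nonneg_imp_u_T_ge: assumes "defect u \<ge> 0" shows "gamma_c T \<eta> \<alpha> * c \<le> u T"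
proof -
  have "\<alpha> * \<eta> * (T * u \<eta>) \<le> T * (\<alpha> * integral {0..\<eta>} u)"
    using integral_u_bounds(2) alpha_pos T_pos by (simp add: mult_left_mono)
  also have "\<dots> \<le> T * u T" using assms T_pos unfolding defect_def by simp
  finally have "\<alpha> * \<eta> * (T * u \<eta>) \<le> T * u T" .
  moreover have "\<alpha> * \<eta> * ((T - \<eta>) * c + \<eta> * u T) \<le> \<alpha> * \<eta> * (T * u \<eta>)"
    using concave_at_eta alpha_pos eta_pos by (intro mult_left_mono) auto
  ultimately have "\<alpha> * \<eta> * (T - \<eta>) * c \<le> (T - \<alpha> * \<eta>^2) * u T"
    by (simp add: algebra_simps power2_eq_square)
  then show ?thesis
    unfolding gamma_c_def using T_minus_alpha_eta2_pos by (simp add: pos_divide_le_eq mult.commute)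
qed

lemma defect_nonneg_imp_D_le:
  assumes "defect u \<ge> 0" and m: "\<And>s. s \<in> {0..T} \<Longrightarrow> m \<le> G s" "0 \<le> m"
  shows "m * D \<le> (1 - \<alpha> * \<eta>) * c"
proof -
  have "m * integral {0..T} A \<le> c - u T"
    using integral_Q_ge[OF m(1), of 0 T] u_T T_pos by simp
  moreover have "integral {0..T} A = integral {0..\<eta>} A + integral {\<eta>..T} A"
    using eta_pos eta_lt by (intro Henstock_Kurzweil_Integration.integral_combine[symmetric]
        integrable_on_subinterval[OF A_cont]) auto
  moreover have "integral {0..\<eta>} A \<ge> 0"
    using eta_lt A_nonneg by (intro integral_nonneg integrable_on_subinterval[OF A_cont]) auto
  ultimately have "m * integral {\<eta>..T} A \<le> c - u T"
    using m(2) by (smt (verit) distrib_left mult_nonneg_nonneg)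
  then have tail: "m * ((1 - \<alpha> * \<eta>) * integral {\<eta>..T} A) \<le> (1 - \<alpha> * \<eta>) * (c - u T)"
    using alpha_eta mult_left_mono[of _ _ "1 - \<alpha> * \<eta>"] by (simp add: mult.left_commute)
  have "integral {0..\<eta>} (\<lambda>t. m * (t * A t)) \<le> integral {0..\<eta>} (\<lambda>t. t * Q G t)"
    using eta_lt Q_lower[OF m(1)]
    by (intro integral_le integrable_on_subinterval[where T=T] continuous_intros A_cont Q_cont
        G_cont) (auto simp: mult.left_commute[of m] intro!: mult_left_mono)
  then have head: "m * integral {0..\<eta>} (\<lambda>t. t * A t) \<le> integral {0..\<eta>} u - \<eta> * u \<eta>"
    using integral_u_eq by simp
  have "m * integral {\<eta>..T} A \<le> u \<eta> - u T"
    using integral_Q_ge[OF m(1), of \<eta> T] u_split[of \<eta> T] eta_pos eta_lt by simp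
  then have "\<eta> * (m * integral {\<eta>..T} A) \<le> \<eta> * (u \<eta> - u T)"
    using eta_pos by (simp add: mult_left_mono)
  with head have "m * (\<eta> * integral {\<eta>..T} A + integral {0..\<eta>} (\<lambda>t. t * A t))
      \<le> integral {0..\<eta>} u - \<eta> * u T"
    by (simp add: algebra_simps)
  then have "\<alpha> * (m * (\<eta> * integral {\<eta>..T} A + integral {0..\<eta>} (\<lambda>t. t * A t)))
      \<le> \<alpha> * (integral {0..\<eta>} u - \<eta> * u T)"
    using alpha_pos by (simp add: mult_left_mono)
  also have "\<dots> \<le> (1 - \<alpha> * \<eta>) * u T"
    using assms(1) unfolding defect_def by (simp add: algebra_simps)
  finally have "m * D \<le> (1 - \<alpha> * \<eta>) * (c - u T) + (1 - \<alpha> * \<eta>) * u T"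
    using tail unfolding D_def by (simp add: algebra_simps)
  then show ?thesis by (simp add: algebra_simps)
qed

lemma defect_ge:
  assumes "\<And>s. s \<in> {0..T} \<Longrightarrow> G s \<le> M"
  shows "(1 - \<alpha> * \<eta>) * c - M * I1 \<le> defect u"
proof -
  have "integral {0..T} (Q G) \<le> integral {0..T} (\<lambda>r. M * A r)"
    using Q_upper[OF assms]
    by (intro integral_le integrable_on_subinterval[where T=T] continuous_intros A_cont Q_cont
        G_cont) auto
  then have "c - M * I1 \<le> u T" using u_T unfolding I1_def by simp
  moreover have "\<alpha> * integral {0..\<eta>} u \<le> \<alpha> * (\<eta> * c)"
    using integral_u_bounds(3) alpha_pos by (simp add: mult_left_mono)
  ultimately show ?thesis unfolding defect_def by (simp add: algebra_simps)
qed

lemma positive_solution: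
  assumes "\<And>t. t \<in> {0..T} \<Longrightarrow> G t = f (u t)" "\<And>t. t \<in> {0..T} \<Longrightarrow> u t \<ge> 0"
    and "defect u = 0" "c \<noteq> 0"
  shows "positive_solution T \<eta> \<alpha> a f u"
  unfolding positive_solution_def
proof (intro conjI exI)
  show "C2_with T u (\<lambda>t. - Q G t) (\<lambda>t. - (a t * G t))"
    unfolding C2_with_def using u_deriv Q_deriv[OF G_cont]
    by (auto intro!: DERIV_minus continuous_intros a_cont G_cont)
  show "\<forall>t. 0 < t \<and> t < T \<longrightarrow> - (a t * G t) + a t * f (u t) = 0"
    using assms(1) by simp
  show "u T = \<alpha> * integral {0..\<eta>} u" using assms(3) unfolding defect_def by simp
  show "\<exists>t\<in>{0..T}. u t \<noteq> 0" using u_0 assms(4) T_pos by (intro bexI[of _ 0]) auto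
qed (use Q_0 assms(2) in auto)

end

section \<open>Delayed approximate problems\<close>

context bvp
begin

lemma uniform_limit_f_ext:
  assumes lim: "uniform_limit {0..T} vs v F" and cont: "continuous_on {0..T} v"
  shows "uniform_limit {0..T} (\<lambda>n s. f_ext (vs n s)) (\<lambda>s. f_ext (v s)) F"
proof -
  obtain K where K: "\<And>s. s \<in> {0..T} \<Longrightarrow> \<bar>v s\<bar> \<le> K"
    using compact_imp_bounded[OF compact_continuous_image[OF cont compact_Icc]]
    by (force simp: bounded_iff)
  have "\<forall>\<^sub>F n in F. \<forall>s\<in>{0..T}. dist (vs n s) (v s) < 1"
    by (rule uniform_limitD[OF lim]) simp
  then have "\<forall>\<^sub>F n in F. vs n ` {0..T} \<subseteq> {-(K+1)..K+1}"
  proof (rule eventually_mono, safe)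
    fix n s assume "\<forall>s\<in>{0..T}. dist (vs n s) (v s) < 1" "s \<in> {0..T}"
    then have "\<bar>vs n s - v s\<bar> < 1" "\<bar>v s\<bar> \<le> K" using K by (auto simp: dist_real_def)
    then show "vs n s \<in> {-(K+1)..K+1}" by auto
  qed
  moreover have "v ` {0..T} \<subseteq> {-(K+1)..K+1}" using K by force
  moreover have "uniformly_continuous_on {-(K+1)..K+1} f_ext"
    by (rule compact_uniformly_continuous) (auto intro: continuous_on_subset[OF f_ext_cont])
  ultimately show ?thesis
    using uniform_limit_compose[OF lim] by (simp add: o_def)
qed

definition delayed :: "real \<Rightarrow> (real \<Rightarrow> real) \<Rightarrow> real \<Rightarrow> real" where
  "delayed h v s = f_ext (v (max (s - h) 0))"

lemma delayed_cont:
  assumes "h > 0" "continuous_on {0..T} v"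
  shows "continuous_on {0..T} (delayed h v)"
  unfolding delayed_def[abs_def]
  by (intro continuous_on_f_ext_comp continuous_on_compose2[OF assms(2)] continuous_intros)
    (use assms(1) in auto)

lemma uniform_limit_delayed:
  assumes "h > 0" "uniform_limit {0..T} vs v F" "continuous_on {0..T} v"
  shows "uniform_limit {0..T} (\<lambda>n. delayed h (vs n)) (delayed h v) F"
proof -
  have "uniform_limit {0..T} (\<lambda>n s. vs n (max (s - h) 0)) (\<lambda>s. v (max (s - h) 0)) F"
    using assms(1) by (intro uniform_limit_compose'[OF assms(2)]) auto
  moreover have "continuous_on {0..T} (\<lambda>s. v (max (s - h) 0))"
    by (intro continuous_on_compose2[OF assms(3)] continuous_intros) (use assms(1) in auto)
  ultimately show ?thesis
    unfolding delayed_def[abs_def] by (rule uniform_limit_f_ext)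
qed

text \<open>The delayed problem \<open>u'' + a f(u(t - h)) = 0\<close> is solved by the method of steps: the
  \<open>k\<close>-th iterate is already exact on \<open>[0, k h]\<close>.\<close>

definition iter :: "real \<Rightarrow> real \<Rightarrow> nat \<Rightarrow> real \<Rightarrow> real" where
  "iter h c k = ((\<lambda>v. sol (delayed h v) c) ^^ k) (\<lambda>t. c)"

definition U :: "real \<Rightarrow> real \<Rightarrow> real \<Rightarrow> real" where
  "U h c = iter h c (nat \<lceil>T / h\<rceil>)"

lemma iter_Suc: "iter h c (Suc k) = sol (delayed h (iter h c k)) c"
  unfolding iter_def by simp

lemma iter_cont: assumes "h > 0" shows "continuous_on {0..T} (iter h c k)"
proof (induction k)
  case 0 then show ?case by (simp add: iter_def)
next
  case (Suc k) then show ?case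
    unfolding iter_Suc by (intro sol_cont delayed_cont assms)
qed

lemma iter_stable:
  assumes "h > 0" "0 \<le> t" "t \<le> real k * h" "t \<le> T"
  shows "iter h c (Suc k) t = iter h c k t"
  using assms(2-)
proof (induction k arbitrary: t)
  case 0
  then show ?case by (simp add: iter_def sol_def)
next
  case (Suc k)
  have "delayed h (iter h c (Suc k)) s = delayed h (iter h c k) s" if "s \<in> {0..t}" for s
    unfolding delayed_def using Suc.prems that assms(1)
    by (intro arg_cong[where f=f_ext] Suc.IH) (auto simp: algebra_simps)
  then show ?case
    unfolding iter_Suc[of h c "Suc k"] iter_Suc[of h c k] sol_def Q_def
    by (intro arg_cong[where f="\<lambda>x. c - x"] integral_cong) auto
qed

lemma U_trajectory:
  assumes "h > 0"
  shows "trajectory T \<eta> \<alpha> a f (delayed h (U h c)) c (U h c)"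
proof -
  have "T \<le> real (nat \<lceil>T / h\<rceil>) * h"
    using real_nat_ceiling_ge[of "T / h"] assms by (simp add: divide_le_eq)
  then have "U h c t = sol (delayed h (U h c)) c t" if "t \<in> {0..T}" for t
    using iter_stable[OF assms, of t] that unfolding U_def iter_Suc by auto
  moreover have "continuous_on {0..T} (U h c)"
    unfolding U_def by (rule iter_cont[OF assms])
  ultimately show ?thesis
    using delayed_cont[OF assms] f_ext_nonneg
    by unfold_locales (auto simp: delayed_def)
qed

lemma uniform_limit_iter:
  assumes "h > 0"
  shows "uniform_limit {0..T} (\<lambda>c'. iter h c' k) (iter h c k) (at c)"
proof (induction k)
  case 0
  show ?case
    unfolding iter_def
    by (auto intro!: uniform_limitI eventually_mono[OF tendstoD[OF tendsto_ident_at]])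
next
  case (Suc k)
  show ?case
    unfolding iter_Suc
    by (intro uniform_limit_sol uniform_limit_delayed Suc.IH assms tendsto_ident_at delayed_cont
        iter_cont)
qed

lemma continuous_defect_U: assumes "h > 0" shows "continuous_on UNIV (\<lambda>c. defect (U h c))"
  unfolding continuous_on_eq_continuous_at[OF open_UNIV] isCont_def U_def
  by (auto intro!: tendsto_defect uniform_limit_iter iter_cont assms)

lemma uniform_limit_delayed_vanishing:
  assumes lim: "uniform_limit {0..T} vs v F" "(hs \<longlongrightarrow> 0) F" and cont: "continuous_on {0..T} v"
    and hs: "\<And>n. hs n > 0" and L: "L \<ge> 0"
    and lip: "\<And>n t t'. t \<in> {0..T} \<Longrightarrow> t' \<in> {0..T} \<Longrightarrow> \<bar>vs n t - vs n t'\<bar> \<le> L * \<bar>t - t'\<bar>"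
  shows "uniform_limit {0..T} (\<lambda>n. delayed (hs n) (vs n)) (\<lambda>s. f_ext (v s)) F"
proof -
  have "uniform_limit {0..T} (\<lambda>n s. vs n (max (s - hs n) 0)) v F"
  proof (rule uniform_limitI)
    fix e :: real assume e: "e > 0"
    have "\<forall>\<^sub>F n in F. \<forall>s\<in>{0..T}. dist (vs n s) (v s) < e / 2"
      using e by (intro uniform_limitD[OF lim(1)]) simp
    moreover have "\<forall>\<^sub>F n in F. dist (hs n) 0 < e / 2 / (L + 1)"
      using e L by (intro tendstoD[OF lim(2)]) simp
    ultimately show "\<forall>\<^sub>F n in F. \<forall>s\<in>{0..T}. dist (vs n (max (s - hs n) 0)) (v s) < e"
    proof eventually_elim
      case (elim n)
      show ?case
      proof
        fix s assume s: "s \<in> {0..T}"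
        define \<sigma> where "\<sigma> = max (s - hs n) 0"
        have \<sigma>: "\<sigma> \<in> {0..T}" "\<bar>\<sigma> - s\<bar> \<le> hs n" unfolding \<sigma>_def using s hs[of n] by auto
        have "\<bar>vs n \<sigma> - vs n s\<bar> \<le> L * hs n"
          using lip[where n=n, OF \<sigma>(1) s] mult_left_mono[OF \<sigma>(2) L] by linarith
        also have "\<dots> \<le> (L + 1) * hs n" using hs[of n] by simp
        also have "\<dots> < (L + 1) * (e / 2 / (L + 1))"
          using elim(2) hs[of n] L by (intro mult_strict_left_mono) (auto simp: dist_real_def)
        also have "\<dots> = e / 2" using L by (simp add: field_simps)
        finally have "\<bar>vs n \<sigma> - vs n s\<bar> < e / 2" .
        moreover have "\<bar>vs n s - v s\<bar> < e / 2" using elim(1) s by (simp add: dist_real_def)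
        ultimately show "dist (vs n \<sigma>) (v s) < e"
          using abs_triangle_ineq[of "vs n \<sigma> - vs n s" "vs n s - v s"] by (simp add: dist_real_def)
      qed
    qed
  qed
  then show ?thesis
    unfolding delayed_def[abs_def] by (rule uniform_limit_f_ext[OF _ cont])
qed

lemma uniform_limit_trajectory:
  assumes lim: "uniform_limit {0..T} us g sequentially" "hs \<longlonglongrightarrow> 0"
    and hs: "\<And>n. hs n > 0" and L: "L \<ge> 0"
    and lip: "\<And>n t t'. t \<in> {0..T} \<Longrightarrow> t' \<in> {0..T} \<Longrightarrow> \<bar>us n t - us n t'\<bar> \<le> L * \<bar>t - t'\<bar>"
    and traj: "\<And>n. trajectory T \<eta> \<alpha> a f (delayed (hs n) (us n)) (us n 0) (us n)"
  shows "trajectory T \<eta> \<alpha> a f (\<lambda>s. f_ext (g s)) (g 0) g"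
proof -
  have cont: "continuous_on {0..T} (us n)" for n
    using trajectory.u_cont[OF traj] .
  have g_cont: "continuous_on {0..T} g"
    by (rule uniform_limit_theorem[OF always_eventually[OF allI[OF cont]] lim(1)]) simp
  have G_lim: "uniform_limit {0..T} (\<lambda>n. delayed (hs n) (us n)) (\<lambda>s. f_ext (g s)) sequentially"
    by (rule uniform_limit_delayed_vanishing[OF lim g_cont hs L lip])
  have c_lim: "(\<lambda>n. us n 0) \<longlonglongrightarrow> g 0"
    using T_pos by (intro tendsto_uniform_limitI[OF lim(1)]) auto
  have "uniform_limit {0..T} (\<lambda>n. sol (delayed (hs n) (us n)) (us n 0)) (sol (\<lambda>s. f_ext (g s)) (g 0))
      sequentially"
    using trajectory.G_cont[OF traj] continuous_on_f_ext_comp[OF g_cont]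
    by (intro uniform_limit_sol[OF G_lim c_lim])
  moreover have "uniform_limit {0..T} us (sol (\<lambda>s. f_ext (g s)) (g 0)) sequentially
      \<longleftrightarrow> uniform_limit {0..T} (\<lambda>n. sol (delayed (hs n) (us n)) (us n 0)) (sol (\<lambda>s. f_ext (g s)) (g 0))
        sequentially"
    by (rule uniform_limit_cong') (auto intro: trajectory.u_eq[OF traj])
  ultimately have lim_sol: "uniform_limit {0..T} us (sol (\<lambda>s. f_ext (g s)) (g 0)) sequentially"
    by simp
  have g_eq: "g t = sol (\<lambda>s. f_ext (g s)) (g 0) t" if t: "t \<in> {0..T}" for t
    using LIMSEQ_unique[OF tendsto_uniform_limitI[OF lim(1) t] tendsto_uniform_limitI[OF lim_sol t]] .
  show ?thesis
    by unfold_locales (use g_eq continuous_on_f_ext_comp[OF g_cont] f_ext_nonneg in blast)+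
qed

end

section \<open>Shooting\<close>

locale bvp_limits = bvp +
  fixes \<alpha>2 \<beta>2 :: real
  assumes lim_0: "((\<lambda>x. f x / x) \<longlongrightarrow> \<alpha>2) (at_right 0)"
    and lim_infinity: "((\<lambda>x. f x / x) \<longlongrightarrow> \<beta>2) at_top"
    and beta2_nonneg: "\<beta>2 \<ge> 0"
    and D_pos: "D > 0" and I1_pos: "I1 > 0"
    and alpha2_gt: "Lambda2 T \<eta> \<alpha> a < \<alpha>2"
    and beta2_lt: "\<beta>2 < Lambda1 T \<eta> \<alpha> a"
begin

lemma defect_U_neg_near_0:
  obtains \<delta> where "\<delta> > 0" "\<And>h c. h > 0 \<Longrightarrow> 0 < c \<Longrightarrow> c \<le> \<delta> \<Longrightarrow> defect (U h c) < 0"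
proof -
  define \<gamma> where "\<gamma> = gamma_c T \<eta> \<alpha>"
  have \<gamma>: "\<gamma> > 0" unfolding \<gamma>_def by (rule gamma_pos)
  obtain m where m: "(1 - \<alpha> * \<eta>) / (\<gamma> * D) < m" "m < \<alpha>2"
    using alpha2_gt dense unfolding Lambda2_eq \<gamma>_def by blast
  have m_pos: "m > 0" using m(1) \<gamma> D_pos alpha_eta by (smt (verit) divide_pos_pos mult_pos_pos)
  have key: "1 - \<alpha> * \<eta> < m * \<gamma> * D" using m(1) \<gamma> D_pos by (simp add: divide_less_eq mult_ac)
  have "\<forall>\<^sub>F x in at_right 0. m < f x / x" by (rule order_tendstoD(1)[OF lim_0 m(2)])
  then obtain b where b: "b > 0" "\<And>x. 0 < x \<Longrightarrow> x < b \<Longrightarrow> m < f x / x"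
    unfolding eventually_at_right_field by auto
  have f_lower: "m * x \<le> f x" if "0 \<le> x" "x < b" for x
    using that b(2)[of x] f_nonneg[of 0] by (cases "x = 0") (auto simp: less_divide_eq)
  show ?thesis
  proof (rule that[of "b / 2"])
    fix h c :: real assume h: "h > 0" and c: "0 < c" "c \<le> b / 2"
    interpret r: trajectory T \<eta> \<alpha> a f "delayed h (U h c)" c "U h c" by (rule U_trajectory[OF h])
    show "defect (U h c) < 0"
    proof (rule ccontr)
      assume "\<not> defect (U h c) < 0"
      then have nonneg: "defect (U h c) \<ge> 0" by simp
      have "m * (\<gamma> * c) \<le> delayed h (U h c) s" if s: "s \<in> {0..T}" for s
      proof -
        define x where "x = U h c (max (s - h) 0)"
        have "max (s - h) 0 \<in> {0..T}" using s h by auto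
        then have "U h c T \<le> x" "x \<le> c" unfolding x_def by (auto intro: r.u_antimono r.u_le_c)
        then have x: "\<gamma> * c \<le> x" "0 \<le> x" "x < b"
          using r.defect_nonneg_imp_u_T_ge[OF nonneg] r.defect_nonneg_imp_u_T_nonneg[OF nonneg] b c
          unfolding \<gamma>_def by auto
        have "m * (\<gamma> * c) \<le> m * x" using x m_pos by simp
        also have "\<dots> \<le> f x" using f_lower x by simp
        finally show ?thesis unfolding delayed_def x_def[symmetric] using f_ext_eq x by simp
      qed
      then have "m * (\<gamma> * c) * D \<le> (1 - \<alpha> * \<eta>) * c"
        using m_pos \<gamma> c by (intro r.defect_nonneg_imp_D_le[OF nonneg]) auto
      then have "m * \<gamma> * D \<le> 1 - \<alpha> * \<eta>" using c by (simp add: mult.commute mult.left_commute)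
      then show False using key by simp
    qed
  qed (use b in simp)
qed

lemma defect_U_pos_near_infinity:
  obtains R where "R > 0" "\<And>h c. h > 0 \<Longrightarrow> R \<le> c \<Longrightarrow> defect (U h c) > 0"
proof -
  obtain b where b: "\<beta>2 < b" "b < (1 - \<alpha> * \<eta>) / I1"
    using beta2_lt dense unfolding Lambda1_eq by blast
  define \<kappa> where "\<kappa> = 1 - \<alpha> * \<eta> - b * I1"
  have \<kappa>: "\<kappa> > 0" unfolding \<kappa>_def using b(2) I1_pos by (simp add: less_divide_eq)
  have "\<forall>\<^sub>F x in at_top. f x / x < b" by (rule order_tendstoD(2)[OF lim_infinity b(1)])
  then obtain X where X: "\<And>x. x \<ge> X \<Longrightarrow> f x / x < b" unfolding eventually_at_top_linorder by auto
  define X' where "X' = max X 1"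
  obtain C where C: "C \<ge> 0" "\<And>x. x \<in> {0..X'} \<Longrightarrow> f x \<le> C" using f_bounded by blast
  have f_upper: "f x \<le> b * x + C" if x: "x \<ge> 0" for x
  proof (cases "x \<le> X'")
    case True
    then have "f x \<le> C" using C x by simp
    moreover have "0 \<le> b * x" using x b(1) beta2_nonneg by simp
    ultimately show ?thesis by simp
  next
    case False
    then have "x \<ge> X" "x > 0" unfolding X'_def by auto
    then show ?thesis using X[of x] C by (simp add: divide_less_eq)
  qed
  define R where "R = C * I1 / \<kappa> + 1"
  have R: "R > 0" unfolding R_def using C I1_pos \<kappa> by (simp add: add_nonneg_pos)
  show ?thesis
  proof (rule that[OF R])
    fix h c :: real assume h: "h > 0" and c: "R \<le> c"
    interpret r: trajectory T \<eta> \<alpha> a f "delayed h (U h c)" c "U h c" by (rule U_trajectory[OF h])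
    have "delayed h (U h c) s \<le> b * c + C" if s: "s \<in> {0..T}" for s
    proof -
      define x where "x = max (U h c (max (s - h) 0)) 0"
      have "max (s - h) 0 \<in> {0..T}" using s h by auto
      then have "x \<le> c" unfolding x_def using r.u_le_c R c by auto
      then have "b * x \<le> b * c" using b(1) beta2_nonneg by (intro mult_left_mono) auto
      moreover have "delayed h (U h c) s \<le> b * x + C"
        unfolding delayed_def f_ext_def x_def by (rule f_upper) simp
      ultimately show ?thesis by simp
    qed
    then have "(1 - \<alpha> * \<eta>) * c - (b * c + C) * I1 \<le> defect (U h c)" by (rule r.defect_ge)
    moreover have "(1 - \<alpha> * \<eta>) * c - (b * c + C) * I1 = \<kappa> * c - C * I1"
      unfolding \<kappa>_def by (simp add: algebra_simps)
    moreover have "\<kappa> * R \<le> \<kappa> * c" using c \<kappa> by simp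
    moreover have "\<kappa> * R - C * I1 = \<kappa>" unfolding R_def using \<kappa> by (simp add: algebra_simps)
    ultimately show "defect (U h c) > 0" using \<kappa> by linarith
  qed
qed

lemma exists_shooting_zeros:
  obtains \<delta> R where "0 < \<delta>" "\<delta> \<le> R" "\<And>h. h > 0 \<Longrightarrow> \<exists>c\<in>{\<delta>..R}. defect (U h c) = 0"
proof -
  obtain \<delta> where \<delta>: "\<delta> > 0" "\<And>h c. h > 0 \<Longrightarrow> 0 < c \<Longrightarrow> c \<le> \<delta> \<Longrightarrow> defect (U h c) < 0"
    using defect_U_neg_near_0 by blast
  obtain R0 where R0: "R0 > 0" "\<And>h c. h > 0 \<Longrightarrow> R0 \<le> c \<Longrightarrow> defect (U h c) > 0"
    using defect_U_pos_near_infinity by blast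
  define R where "R = max R0 \<delta>"
  show ?thesis
  proof (rule that[of \<delta> R])
    fix h :: real assume h: "h > 0"
    have "defect (U h \<delta>) \<le> 0" "0 \<le> defect (U h R)" "\<delta> \<le> R"
      using \<delta>(2)[OF h \<delta>(1)] R0(2)[OF h] unfolding R_def by (auto simp: less_imp_le)
    then show "\<exists>c\<in>{\<delta>..R}. defect (U h c) = 0"
      using IVT'[of "\<lambda>c. defect (U h c)" \<delta> 0 R] continuous_on_subset[OF continuous_defect_U[OF h]]
      by force
  qed (use \<delta> in \<open>auto simp: R_def\<close>)
qed

lemma shooting_zero_bounds:
  assumes h: "h > 0" and c: "0 < c" "c \<le> R" and zero: "defect (U h c) = 0"
    and M: "\<And>x. x \<in> {0..R} \<Longrightarrow> f x \<le> M"
  shows "\<And>t. t \<in> {0..T} \<Longrightarrow> 0 \<le> U h c t \<and> U h c t \<le> R"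
    and "\<And>t t'. t \<in> {0..T} \<Longrightarrow> t' \<in> {0..T} \<Longrightarrow> \<bar>U h c t - U h c t'\<bar> \<le> M * A T * \<bar>t - t'\<bar>"
proof -
  interpret r: trajectory T \<eta> \<alpha> a f "delayed h (U h c)" c "U h c" by (rule U_trajectory[OF h])
  have range: "0 \<le> U h c t \<and> U h c t \<le> R" if t: "t \<in> {0..T}" for t
    using r.u_antimono[of t T] t r.defect_nonneg_imp_u_T_nonneg r.u_le_c[OF t] c zero by auto
  then show "\<And>t. t \<in> {0..T} \<Longrightarrow> 0 \<le> U h c t \<and> U h c t \<le> R" by blast
  have "delayed h (U h c) s \<le> M" if "s \<in> {0..T}" for s
    using range[of "max (s - h) 0"] that h M f_ext_eq unfolding delayed_def by auto
  then show "\<And>t t'. t \<in> {0..T} \<Longrightarrow> t' \<in> {0..T} \<Longrightarrow> \<bar>U h c t - U h c t'\<bar> \<le> M * A T * \<bar>t - t'\<bar>"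
    by (rule r.u_lipschitz)
qed

lemma exists_positive_solution: "\<exists>u. positive_solution T \<eta> \<alpha> a f u"
proof -
  obtain \<delta> R where \<delta>R: "0 < \<delta>" "\<delta> \<le> R" "\<And>h. h > 0 \<Longrightarrow> \<exists>c\<in>{\<delta>..R}. defect (U h c) = 0"
    using exists_shooting_zeros by blast
  obtain M where M: "M \<ge> 0" "\<And>x. x \<in> {0..R} \<Longrightarrow> f x \<le> M" using f_bounded by blast
  define hs where "hs n = inverse (real (Suc n))" for n
  have hs: "hs n > 0" for n unfolding hs_def by simp
  obtain cs where cs: "\<And>n. cs n \<in> {\<delta>..R}" "\<And>n. defect (U (hs n) (cs n)) = 0"
    using \<delta>R(3)[OF hs] by metis
  define us where "us n = U (hs n) (cs n)" for n
  have cs_pos: "0 < cs n" "cs n \<le> R" for n using cs(1)[of n] \<delta>R(1) by auto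
  note bounds = shooting_zero_bounds[OF hs cs_pos cs(2) M(2), folded us_def]
  have us_0: "us n 0 = cs n" for n
    unfolding us_def by (rule trajectory.u_0[OF U_trajectory[OF hs]])
  have traj: "trajectory T \<eta> \<alpha> a f (delayed (hs n) (us n)) (us n 0) (us n)" for n
    unfolding us_0 unfolding us_def by (rule U_trajectory[OF hs])
  have L: "M * A T \<ge> 0" using M(1) A_nonneg[of T] T_pos by simp
  obtain g k where k: "strict_mono k" and lim: "uniform_limit {0..T} (\<lambda>n. us (k n)) g sequentially"
    using equi_lipschitz_uniformly_convergent_subseq[of 0 T us R "M * A T"] bounds L
    by (metis abs_of_nonneg)
  have hs_lim: "(\<lambda>n. hs (k n)) \<longlonglongrightarrow> 0"
    using LIMSEQ_subseq_LIMSEQ[OF LIMSEQ_inverse_real_of_nat k] unfolding hs_def by (simp add: o_def)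
  interpret g: trajectory T \<eta> \<alpha> a f "\<lambda>s. f_ext (g s)" "g 0" g
    by (rule uniform_limit_trajectory[OF lim hs_lim hs L bounds(2) traj])
  have "(\<lambda>n. defect (us (k n))) \<longlonglongrightarrow> defect g"
    by (intro tendsto_defect[OF lim] trajectory.u_cont[OF traj]) simp
  then have "defect g = 0" using cs(2) unfolding us_def by (simp add: LIMSEQ_const_iff)
  moreover have g_nonneg: "g t \<ge> 0" if "t \<in> {0..T}" for t
    using bounds(1) that by (intro LIMSEQ_le_const[OF tendsto_uniform_limitI[OF lim]]) auto
  moreover have "g 0 \<ge> \<delta>"
    using cs(1) T_pos us_0
    by (intro LIMSEQ_le_const[OF tendsto_uniform_limitI[OF lim]]) auto
  ultimately have "positive_solution T \<eta> \<alpha> a f g"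
    using \<delta>R(1) f_ext_eq by (intro g.positive_solution) auto
  then show ?thesis by blast
qed

end

theorem corollary5p3:
  fixes T \<eta> \<alpha> \<alpha>2 \<beta>2 \<theta>1 \<theta>2 :: real
    and f a :: "real \<Rightarrow> real"
  assumes "T > 0" and "0 < \<eta>" and "\<eta> < T"
    and "0 < \<alpha>" and "\<alpha> < 1 / \<eta>"
    and "continuous_on {0..} f" and "\<forall>u\<ge>0. f u \<ge> 0"
    and "continuous_on {0..T} a" and "\<forall>t\<in>{0..T}. a t \<ge> 0"
    and "\<exists>t0\<in>{0..T}. a t0 > 0"
    and "((\<lambda>u. f u / u) \<longlongrightarrow> \<alpha>2) (at_right 0)"
    and "((\<lambda>u. f u / u) \<longlongrightarrow> \<beta>2) at_top"
    and "\<theta>2 \<ge> 1" and "\<alpha>2 > \<theta>2 / gamma_c T \<eta> \<alpha> * Lambda2 T \<eta> \<alpha> a"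
    and "0 < \<theta>1" and "\<theta>1 \<le> 1" and "0 \<le> \<beta>2" and "\<beta>2 < \<theta>1 * Lambda1 T \<eta> \<alpha> a"
  shows "\<exists>u. positive_solution T \<eta> \<alpha> a f u"
proof -
  have alpha_eta: "\<alpha> * \<eta> < 1" using assms(2,5) by (simp add: less_divide_eq mult.commute)
  interpret b: bvp T \<eta> \<alpha> a f by unfold_locales (use assms alpha_eta in auto)
  obtain t0 where t0: "t0 \<in> {0..T}" "a t0 > 0" using assms(10) by blast
  have "Lambda1 T \<eta> \<alpha> a > 0"
    unfolding b.Lambda1_eq using b.I1_pos[OF t0] alpha_eta by simp
  then have "\<theta>1 * Lambda1 T \<eta> \<alpha> a \<le> Lambda1 T \<eta> \<alpha> a"
    using mult_right_mono[OF assms(16)] by fastforce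
  then have "\<beta>2 < Lambda1 T \<eta> \<alpha> a" using assms(18) by linarith
  moreover have "Lambda2 T \<eta> \<alpha> a > 0"
    unfolding b.Lambda2_eq using b.gamma_pos b.D_pos[OF t0] alpha_eta by simp
  then have "Lambda2 T \<eta> \<alpha> a < \<alpha>2"
    using assms(13,14) b.gamma_pos b.gamma_le_1 mult_right_mono[of 1 "\<theta>2 / gamma_c T \<eta> \<alpha>"]
    by (smt (verit) le_divide_eq_1_pos)
  ultimately interpret bvp_limits T \<eta> \<alpha> a f \<alpha>2 \<beta>2
    using assms(11,12,17) b.I1_pos[OF t0] b.D_pos[OF t0] by unfold_locales auto
  show ?thesis by (rule exists_positive_solution)
qed

end
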